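(* Almost surely, the function $\mathcal D:\mathbb R\to\mathbb R$ is continuous and non-decreasing.
   Context: Last passage percolation (LPP): for a sequence $f=(f_1,f_2,\dots)$ of continuous functions $\mathbb R\to\mathbb R$ (thought of as placed on horizontal lines indexed $1,2,\dots$ from top to bottom), $y\le x$ and $n\ge m$, an up-right path $\gamma$ from $(y,n)$ to $(x,m)$ is specified by jump times $y=t_{n+1}\le t_n\le\dots\le t_{m+1}\le t_m=x$ (the path is on line $i$ during $[t_{i+1},t_i]$ and jumps from line $i$ to line $i-1$ at time $t_i$); its weight is $f[\gamma]=\sum_{i=m}^n\big(f_i(t_i)-f_i(t_{i+1})\big)$, and $f[(y,n)\to(x,m)]=\sup_\gamma f[\gamma]$ over all such paths; a maximizing path is a geodesic. The parabolic Airy line ensemble $\mathcal P=(\mathcal P_1,\mathcal P_2,\dots)$ is the random $\mathbb N$-indexed collection of continuous non-intersecting curves $\mathcal P_1>\mathcal P_2>\cdots$ on $\mathbb R$ such that, for all $m\in\mathbb N$ and $t_1<\dots<t_m$, the point process $\{(\mathcal P_i(t_j)+t_j^2,t_j): i\in\mathbb N, j\le m\}$ is determinantal with the extended Airy kernel $K((x,t);(y,s))=\int_0^\infty e^{-u(t-s)}\mathrm{Ai}(x+u)\mathrm{Ai}(y+u)\,du$ for $t\ge s$ and $-\int_{-\infty}^0 e^{-u(t-s)}\mathrm{Ai}(x+u)\mathrm{Ai}(y+u)\,du$ for $t<s$. The parabolic Airy sheet $\mathcal S:\mathbb R^2\to\mathbb R$ is the continuous random process (unique in law) such that (i) $\mathcal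 S(\cdot+z,\cdot+z)\overset{d}{=}\mathcal S(\cdot,\cdot)$ for every $z\in\mathbb R$, and (ii) $\mathcal S$ can be coupled with $\mathcal P$ so that $\mathcal S(0,\cdot)=\mathcal P_1(\cdot)$ and, almost surely, for all rational $x,y,z$ with $y>0$ there is a random $K$ such that for all $k\ge K$, $\mathcal S(y,z)-\mathcal S(y,x)=\mathcal P[(y)_k\to(z,1)]-\mathcal P[(y)_k\to(x,1)]$, where $(y)_k=(-(k/(2y))^{1/2},k)$. Fix $y_a<y_b$ and define the weight difference profile $\mathcal D(x)=\mathcal S(y_b,x)-\mathcal S(y_a,x)$. *)

theory Defs
  imports "HOL-Probability.Probability"
begin

definition airy_ai :: "real \<Rightarrow> real" where
  "airy_ai x = (1 / pi) * Lim at_top (\<lambda>R. integral {0..R} (\<lambda>t. cos (t ^ 3 / 3 + x * t)))"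

definition airy_kernel :: "real \<times> real \<Rightarrow> real \<times> real \<Rightarrow> real" where
  "airy_kernel p q = (case p of (x, t) \<Rightarrow> case q of (y, s) \<Rightarrow>
     if s \<le> t then (LINT u:{0..}|lborel. exp (- u * (t - s)) * airy_ai (x + u) * airy_ai (y + u))
     else - (LINT u:{..0}|lborel. exp (- u * (t - s)) * airy_ai (x + u) * airy_ai (y + u)))"

definition det_n :: "nat \<Rightarrow> (nat \<Rightarrow> nat \<Rightarrow> real) \<Rightarrow> real" where
  "det_n n A = (\<Sum>\<sigma> | \<sigma> permutes {..<n}. of_int (sign \<sigma>) * (\<Prod>i<n. A i (\<sigma> i)))"

section \<open>Parabolic Airy line ensemble (lines indexed 1,2,...; index 0 unused)\<close>

definition index_tuples :: "nat \<Rightarrow> nat \<Rightarrow> (nat \<Rightarrow> nat \<times> nat) set" where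
  "index_tuples n m = {\<iota> \<in> {..<n} \<rightarrow>\<^sub>E ({1..} \<times> {..<m}). inj_on \<iota> {..<n}}"

text \<open>P is a parabolic Airy line ensemble on the probability space M:
  random continuous non-intersecting curves such that for all times tau_0 < ... < tau_(m-1)
  the point process {(P_i(tau_j) + tau_j^2, tau_j)} is determinantal with kernel airy_kernel
  (w.r.t. Lebesgue x counting measure): its n-point correlation functions are
  det[K(p_a, p_b)]_{a,b<n}, expressed via the factorial moment measures.\<close>
definition parabolic_airy_line_ensemble ::
  "'a measure \<Rightarrow> ('a \<Rightarrow> nat \<Rightarrow> real \<Rightarrow> real) \<Rightarrow> bool" where
  "parabolic_airy_line_ensemble M P \<longleftrightarrow>
    (\<forall>i t. (\<lambda>\<omega>. P \<omega> i t) \<in> borel_measurable M) \<and>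
    (AE \<omega> in M. \<forall>i\<ge>1. continuous_on UNIV (P \<omega> i) \<and> (\<forall>t. P \<omega> (Suc i) t < P \<omega> i t)) \<and>
    (\<forall>(m::nat) (\<tau>::nat \<Rightarrow> real). strict_mono_on {..<m} \<tau> \<longrightarrow>
      (\<forall>n\<ge>1. \<forall>F :: (nat \<Rightarrow> real \<times> real) \<Rightarrow> ennreal.
         F \<in> borel_measurable (PiM {..<n} (\<lambda>_. borel)) \<longrightarrow>
         (\<integral>\<^sup>+ \<omega>. (\<integral>\<^sup>+ \<iota>. F (\<lambda>k. if k < n then
                 (P \<omega> (fst (\<iota> k)) (\<tau> (snd (\<iota> k))) + (\<tau> (snd (\<iota> k)))\<^sup>2, \<tau> (snd (\<iota> k)))
               else undefined) \<partial>count_space (index_tuples n m)) \<partial>M)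
         = (\<Sum>j \<in> {..<n} \<rightarrow>\<^sub>E {..<m}.
              \<integral>\<^sup>+ x. F (\<lambda>k. if k < n then (x k, \<tau> (j k)) else undefined) *
                 ennreal (det_n n (\<lambda>a b. airy_kernel (x a, \<tau> (j a)) (x b, \<tau> (j b))))
              \<partial>(PiM {..<n} (\<lambda>_. lborel)))))"

definition lpp :: "(nat \<Rightarrow> real \<Rightarrow> real) \<Rightarrow> real \<times> nat \<Rightarrow> real \<times> nat \<Rightarrow> real" where
  "lpp f p q = (case p of (y, n) \<Rightarrow> case q of (x, m) \<Rightarrow>
     (SUP t \<in> {t :: nat \<Rightarrow> real. t (Suc n) = y \<and> t m = x \<and> (\<forall>i\<in>{m..n}. t (Suc i) \<le> t i)}.
        (\<Sum>i = m..n. f i (t i) - f i (t (Suc i)))))"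

definition airy_sheet_coupling ::
  "'a measure \<Rightarrow> ('a \<Rightarrow> nat \<Rightarrow> real \<Rightarrow> real) \<Rightarrow> ('a \<Rightarrow> real \<Rightarrow> real \<Rightarrow> real) \<Rightarrow> bool" where
  "airy_sheet_coupling M P S \<longleftrightarrow>
    parabolic_airy_line_ensemble M P \<and>
    (\<forall>x y. (\<lambda>\<omega>. S \<omega> x y) \<in> borel_measurable M) \<and>
    (AE \<omega> in M. continuous_on UNIV (\<lambda>(x, y). S \<omega> x y)) \<and>
    (\<forall>z. distr M (PiM UNIV (\<lambda>_. borel)) (\<lambda>\<omega> (x, y). S \<omega> (x + z) (y + z))
         = distr M (PiM UNIV (\<lambda>_. borel)) (\<lambda>\<omega> (x, y). S \<omega> x y)) \<and>
    (AE \<omega> in M. \<forall>x. S \<omega> 0 x = P \<omega> 1 x) \<and>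
    (AE \<omega> in M. \<forall>x\<in>\<rat>. \<forall>y\<in>\<rat>. \<forall>z\<in>\<rat>. y > 0 \<longrightarrow>
       (\<exists>K. \<forall>k::nat\<ge>K.
          S \<omega> y z - S \<omega> y x =
            lpp (P \<omega>) (- sqrt (real k / (2 * y)), k) (z, 1)
          - lpp (P \<omega>) (- sqrt (real k / (2 * y)), k) (x, 1)))"

end

theory Submission
  imports Defs
begin

text \<open>For last passage percolation into line 1 the quadrangle inequality holds: for starting
  points \<open>a \<le> b\<close> on line \<open>k\<close> and endpoints \<open>b \<le> x \<le> z\<close>,
  \<open>f[(a,k) \<rightarrow> (z,1)] + f[(b,k) \<rightarrow> (x,1)] \<le> f[(a,k) \<rightarrow> (x,1)] + f[(b,k) \<rightarrow> (z,1)]\<close>,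
  because the pointwise minimum and maximum of two paths are again paths whose total weight is
  unchanged.  For rational \<open>0 < a < b\<close> the coupling expresses increments of \<open>S(a,\<cdot>)\<close> and
  \<open>S(b,\<cdot>)\<close> through such passage times from \<open>(-sqrt(k/(2a)), k)\<close> and
  \<open>(-sqrt(k/(2b)), k)\<close> with \<open>k\<close> large, so \<open>S(b,\<cdot>) - S(a,\<cdot>)\<close> is non-decreasing; continuity of
  the sheet extends this to all real \<open>0 < a < b\<close>, and the diagonal shift invariance of the sheet
  in law removes the restriction \<open>0 < a\<close>.\<close>

definition lpp_paths :: "nat \<Rightarrow> real \<Rightarrow> real \<Rightarrow> (nat \<Rightarrow> real) set" where
  "lpp_paths k a x = {t. t (Suc k) = a \<and> t 1 = x \<and> (\<forall>i\<in>{1..k}. t (Suc i) \<le> t i)}"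

definition path_weight :: "(nat \<Rightarrow> real \<Rightarrow> real) \<Rightarrow> nat \<Rightarrow> (nat \<Rightarrow> real) \<Rightarrow> real" where
  "path_weight f k t = (\<Sum>i = 1..k. f i (t i) - f i (t (Suc i)))"

lemma lpp_to_line1: "lpp f (a, k) (x, 1) = (SUP t \<in> lpp_paths k a x. path_weight f k t)"
  by (simp add: lpp_def lpp_paths_def path_weight_def)

lemma lpp_paths_antimono:
  assumes t: "t \<in> lpp_paths k a x" and "1 \<le> i" "i \<le> j" "j \<le> Suc k"
  shows "t j \<le> t i"
  using assms(3,4)
proof (induction j rule: dec_induct)
  case (step n)
  have "t (Suc n) \<le> t n" using t \<open>1 \<le> i\<close> step by (auto simp: lpp_paths_def)
  with step show ?case by simp
qed simp

lemma lpp_paths_range: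
  assumes t: "t \<in> lpp_paths k a x" and "1 \<le> i" "i \<le> Suc k"
  shows "t i \<in> {a..x}"
  using lpp_paths_antimono[OF t \<open>1 \<le> i\<close> \<open>i \<le> Suc k\<close>] lpp_paths_antimono[OF t order_refl \<open>1 \<le> i\<close>]
    assms by (simp add: lpp_paths_def)

lemma lpp_paths_nonempty:
  assumes "1 \<le> k" "a \<le> x"
  shows "lpp_paths k a x \<noteq> {}"
proof -
  have "(\<lambda>i. if i = Suc k then a else x) \<in> lpp_paths k a x"
    using assms by (auto simp: lpp_paths_def)
  then show ?thesis by blast
qed

lemma bdd_above_path_weight:
  assumes cont: "\<forall>i\<in>{1..k}. continuous_on {a..x} (f i)"
  shows "bdd_above (path_weight f k ` lpp_paths k a x)"
proof -
  have "\<exists>B. \<forall>s\<in>{a..x}. \<bar>f i s\<bar> \<le> B" if "i \<in> {1..k}" for i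
    using compact_imp_bounded[OF compact_continuous_image[OF cont[rule_format, OF that]]]
    by (auto simp: bounded_iff)
  then obtain B where B: "\<And>i s. i \<in> {1..k} \<Longrightarrow> s \<in> {a..x} \<Longrightarrow> \<bar>f i s\<bar> \<le> B i"
    by metis
  have "path_weight f k t \<le> (\<Sum>i = 1..k. 2 * B i)" if t: "t \<in> lpp_paths k a x" for t
    unfolding path_weight_def
  proof (rule sum_mono)
    fix i assume i: "i \<in> {1..k}"
    then have "\<bar>f i (t i)\<bar> \<le> B i" "\<bar>f i (t (Suc i))\<bar> \<le> B i"
      using B lpp_paths_range[OF t] by auto
    then show "f i (t i) - f i (t (Suc i)) \<le> 2 * B i" by linarith
  qed
  then show ?thesis by (rule bdd_aboveI2)
qed

lemma path_weight_min_max: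
  "path_weight f k (\<lambda>i. min (t i) (s i)) + path_weight f k (\<lambda>i. max (t i) (s i))
     = path_weight f k t + path_weight f k s"
proof -
  have "f i (min p q) + f i (max p q) = f i p + f i q" for i and p q :: real
    by (simp add: min_def max_def)
  then show ?thesis
    unfolding path_weight_def sum.distrib[symmetric] by (intro sum.cong) (simp_all add: algebra_simps)
qed

lemma lpp_quadrangle:
  assumes cont: "\<forall>i\<in>{1..k}. continuous_on UNIV (f i)"
    and "1 \<le> k" "a \<le> b" "b \<le> x" "x \<le> z"
  shows "lpp f (a, k) (z, 1) + lpp f (b, k) (x, 1) \<le> lpp f (a, k) (x, 1) + lpp f (b, k) (z, 1)"
proof -
  let ?L = "\<lambda>a x. SUP t \<in> lpp_paths k a x. path_weight f k t"
  have upper: "path_weight f k t \<le> ?L a x" if "t \<in> lpp_paths k a x" for t a x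
    using that cont by (intro cSUP_upper bdd_above_path_weight) (auto intro: continuous_on_subset)
  have swap: "path_weight f k t + path_weight f k s \<le> ?L a x + ?L b z"
    if t: "t \<in> lpp_paths k a z" and s: "s \<in> lpp_paths k b x" for t s
  proof -
    have "(\<lambda>i. min (t i) (s i)) \<in> lpp_paths k a x" "(\<lambda>i. max (t i) (s i)) \<in> lpp_paths k b z"
      using t s assms by (auto simp: lpp_paths_def intro: min.mono max.mono)
    then show ?thesis using upper path_weight_min_max[of f k t s] by (smt (verit))
  qed
  have "?L a z \<le> ?L a x + ?L b z - ?L b x"
  proof (rule cSUP_least)
    fix t assume t: "t \<in> lpp_paths k a z"
    have "?L b x \<le> ?L a x + ?L b z - path_weight f k t"
      using assms swap[OF t] by (intro cSUP_least lpp_paths_nonempty) (auto simp: field_simps)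
    then show "path_weight f k t \<le> ?L a x + ?L b z - ?L b x" by linarith
  qed (use assms lpp_paths_nonempty in auto)
  then show ?thesis unfolding lpp_to_line1 by linarith
qed

lemma nonneg_if_nonneg_on_Rats:
  fixes g :: "real \<Rightarrow> real"
  assumes "continuous_on UNIV g" "open U" "\<And>q. q \<in> \<rat> \<Longrightarrow> q \<in> U \<Longrightarrow> 0 \<le> g q" "p \<in> U"
  shows "0 \<le> g p"
proof -
  have "closed {x. 0 \<le> g x}"
    using closed_Collect_le[OF continuous_on_const assms(1), of 0] by simp
  moreover have "U \<inter> \<rat> \<subseteq> {x. 0 \<le> g x}" using assms(3) by auto
  ultimately have "closure (U \<inter> \<rat>) \<subseteq> {x. 0 \<le> g x}" by (rule closure_minimal[rotated])
  moreover have "p \<in> closure (U \<inter> \<rat>)"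
    using open_Int_closure_subset[OF assms(2), of \<rat>] assms(4) Rats_closure_real by auto
  ultimately show ?thesis by auto
qed

lemma mono_if_mono_on_Rats:
  fixes g :: "real \<Rightarrow> real"
  assumes cont: "continuous_on UNIV g"
    and mono_Rats: "\<And>x z. x \<in> \<rat> \<Longrightarrow> z \<in> \<rat> \<Longrightarrow> x < z \<Longrightarrow> g x \<le> g z"
  shows "mono g"
proof (rule monoI)
  have from_Rat: "0 \<le> g z - g q" if "q \<in> \<rat>" "q < z" for q z
    by (rule nonneg_if_nonneg_on_Rats[where U = "{q<..}"])
      (use that mono_Rats in \<open>auto intro!: continuous_on_diff continuous_on_const cont\<close>)
  fix x z :: real assume "x \<le> z"
  then consider "x = z" | "x < z" by linarith
  then show "g x \<le> g z"
  proof cases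
    case 2
    have "0 \<le> g z - g x"
      by (rule nonneg_if_nonneg_on_Rats[where U = "{..<z}"])
        (use 2 from_Rat in \<open>auto intro!: continuous_on_diff continuous_on_const cont\<close>)
    then show ?thesis by simp
  qed simp
qed

lemma continuous_on_sections:
  assumes "continuous_on UNIV (\<lambda>(x, y). F x y)"
  shows "continuous_on UNIV (\<lambda>y. F x y)" "continuous_on UNIV (\<lambda>x. F x y)"
proof -
  have "continuous_on UNIV ((\<lambda>(x, y). F x y) \<circ> (\<lambda>y. (x, y)))"
    by (rule continuous_on_compose) (auto intro: continuous_on_Pair continuous_on_id continuous_on_const continuous_on_subset[OF assms])
  moreover have "continuous_on UNIV ((\<lambda>(x, y). F x y) \<circ> (\<lambda>x. (x, y)))"
    by (rule continuous_on_compose) (auto intro: continuous_on_Pair continuous_on_id continuous_on_const continuous_on_subset[OF assms])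
  ultimately
  show "continuous_on UNIV (\<lambda>y. F x y)" "continuous_on UNIV (\<lambda>x. F x y)"
    by (simp_all add: o_def)
qed

lemma sheet_increment_mono_Rats:
  fixes P :: "nat \<Rightarrow> real \<Rightarrow> real" and S :: "real \<Rightarrow> real \<Rightarrow> real"
  assumes cont: "\<forall>i\<ge>1. continuous_on UNIV (P i)"
    and lpp_limit: "\<forall>x\<in>\<rat>. \<forall>y\<in>\<rat>. \<forall>z\<in>\<rat>. y > 0 \<longrightarrow>
       (\<exists>K. \<forall>k::nat\<ge>K.
          S y z - S y x =
            lpp P (- sqrt (real k / (2 * y)), k) (z, 1)
          - lpp P (- sqrt (real k / (2 * y)), k) (x, 1))"
    and Rats: "a \<in> \<rat>" "b \<in> \<rat>" "x \<in> \<rat>" "z \<in> \<rat>" and "0 < a" "a < b" "x \<le> z"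
  shows "S a z - S a x \<le> S b z - S b x"
proof -
  define start where "start y k = - sqrt (real k / (2 * y))" for y :: real and k :: nat
  have "\<exists>K. \<forall>k\<ge>K. S y z - S y x = lpp P (start y k, k) (z, 1) - lpp P (start y k, k) (x, 1)"
    if "y \<in> \<rat>" "0 < y" for y
    using lpp_limit Rats that unfolding start_def by blast
  then obtain Ka Kb where
    Ka: "\<forall>k\<ge>Ka. S a z - S a x = lpp P (start a k, k) (z, 1) - lpp P (start a k, k) (x, 1)" and
    Kb: "\<forall>k\<ge>Kb. S b z - S b x = lpp P (start b k, k) (z, 1) - lpp P (start b k, k) (x, 1)"
    using Rats \<open>0 < a\<close> \<open>a < b\<close> by (meson order.strict_trans)
  define c where "c = \<bar>x\<bar> + \<bar>z\<bar>"
  define k where "k = max (max Ka Kb) (max 1 (nat \<lceil>2 * b * c\<^sup>2\<rceil>))"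
  have "nat \<lceil>2 * b * c\<^sup>2\<rceil> \<le> k" unfolding k_def by (rule max.coboundedI2) simp
  then have "2 * b * c\<^sup>2 \<le> real k"
    using real_nat_ceiling_ge[of "2 * b * c\<^sup>2"] of_nat_mono[of "nat \<lceil>2 * b * c\<^sup>2\<rceil>" k] by linarith
  then have "c \<le> sqrt (real k / (2 * b))"
    using \<open>0 < a\<close> \<open>a < b\<close> by (intro real_le_rsqrt) (simp add: field_simps)
  then have "start b k \<le> x" unfolding start_def c_def by linarith
  moreover have "start a k \<le> start b k"
    using \<open>0 < a\<close> \<open>a < b\<close> unfolding start_def by (simp add: frac_le)
  moreover have "1 \<le> k" "Ka \<le> k" "Kb \<le> k" unfolding k_def by auto
  ultimately show ?thesis
    using lpp_quadrangle[of k P "start a k" "start b k" x z] cont \<open>x \<le> z\<close> Ka Kb by auto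
qed

lemma sheet_increment_mono:
  fixes P :: "nat \<Rightarrow> real \<Rightarrow> real" and S :: "real \<Rightarrow> real \<Rightarrow> real"
  assumes cont: "\<forall>i\<ge>1. continuous_on UNIV (P i)"
    and contS: "continuous_on UNIV (\<lambda>(x, y). S x y)"
    and lpp_limit: "\<forall>x\<in>\<rat>. \<forall>y\<in>\<rat>. \<forall>z\<in>\<rat>. y > 0 \<longrightarrow>
       (\<exists>K. \<forall>k::nat\<ge>K.
          S y z - S y x =
            lpp P (- sqrt (real k / (2 * y)), k) (z, 1)
          - lpp P (- sqrt (real k / (2 * y)), k) (x, 1))"
    and "0 < a" "a < b" "x \<le> z"
  shows "S b x - S a x \<le> S b z - S a z"
proof -
  note sections = continuous_on_sections[OF contS]
  have Rats_ab: "0 \<le> (S b z - S a z) - (S b x - S a x)"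
    if "a \<in> \<rat>" "b \<in> \<rat>" "0 < a" "a < b" for a b
  proof -
    have "mono (\<lambda>x. S b x - S a x)"
    proof (rule mono_if_mono_on_Rats)
      fix x z :: real assume "x \<in> \<rat>" "z \<in> \<rat>" "x < z"
      then show "S b x - S a x \<le> S b z - S a z"
        using sheet_increment_mono_Rats[OF cont lpp_limit, of a b x z] that by simp
    qed (intro continuous_on_diff sections)
    then show ?thesis using \<open>x \<le> z\<close> by (auto dest: monoD)
  qed
  have Rats_a: "0 \<le> (S b z - S a z) - (S b x - S a x)" if "a \<in> \<rat>" "0 < a" "a < b" for a b
    by (rule nonneg_if_nonneg_on_Rats[where U = "{a<..}" and g = "\<lambda>b. (S b z - S a z) - (S b x - S a x)"])
      (use that Rats_ab in \<open>auto intro!: continuous_on_diff continuous_on_const sections\<close>)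
  have "0 \<le> (S b z - S a z) - (S b x - S a x)"
    by (rule nonneg_if_nonneg_on_Rats[where U = "{0<..<b}" and g = "\<lambda>a. (S b z - S a z) - (S b x - S a x)"])
      (use Rats_a \<open>0 < a\<close> \<open>a < b\<close> in \<open>auto intro!: continuous_on_diff continuous_on_const sections\<close>)
  then show ?thesis by simp
qed

lemma measurable_into_PiM_UNIV:
  assumes "\<And>i. (\<lambda>\<omega>. F \<omega> i) \<in> borel_measurable M"
  shows "F \<in> measurable M (PiM UNIV (\<lambda>_. borel))"
  using assms by (intro measurable_PiM_single') auto

lemma pred_increment_mono_Rats:
  "Measurable.pred (PiM UNIV (\<lambda>_. borel)) (\<lambda>g :: real \<times> real \<Rightarrow> real.
     \<forall>x\<in>\<rat>. \<forall>z\<in>\<rat>. x \<le> z \<longrightarrow> g (b, x) - g (a, x) \<le> g (b, z) - g (a, z))"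
  by (intro measurable_pred_countable[OF countable_rat] pred_intros_imp')
    (simp add: pred_def borel_measurable_le borel_measurable_diff measurable_component_singleton)

lemma AE_transfer_distr_eq:
  assumes "distr M N X = distr M N Y" "X \<in> measurable M N" "Y \<in> measurable M N"
    and "{g \<in> space N. Q g} \<in> sets N" "AE \<omega> in M. Q (X \<omega>)"
  shows "AE \<omega> in M. Q (Y \<omega>)"
proof -
  have "AE g in distr M N X. Q g" using AE_distr_iff[OF assms(2,4)] assms(5) by simp
  then have "AE g in distr M N Y. Q g" by (simp only: assms(1))
  then show ?thesis using AE_distr_iff[OF assms(3,4)] by simp
qed

lemma AE_sheet_increment_mono_pos:
  assumes "airy_sheet_coupling M P S"
  shows "AE \<omega> in M. \<forall>a b x z. 0 < a \<longrightarrow> a < b \<longrightarrow> x \<le> z \<longrightarrow>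
                      S \<omega> b x - S \<omega> a x \<le> S \<omega> b z - S \<omega> a z"
proof -
  have "AE \<omega> in M. \<forall>i\<ge>1. continuous_on UNIV (P \<omega> i) \<and> (\<forall>t. P \<omega> (Suc i) t < P \<omega> i t)"
    and "AE \<omega> in M. continuous_on UNIV (\<lambda>(x, y). S \<omega> x y)"
    and "AE \<omega> in M. \<forall>x\<in>\<rat>. \<forall>y\<in>\<rat>. \<forall>z\<in>\<rat>. y > 0 \<longrightarrow>
       (\<exists>K. \<forall>k::nat\<ge>K.
          S \<omega> y z - S \<omega> y x =
            lpp (P \<omega>) (- sqrt (real k / (2 * y)), k) (z, 1)
          - lpp (P \<omega>) (- sqrt (real k / (2 * y)), k) (x, 1))"
    using assms unfolding airy_sheet_coupling_def parabolic_airy_line_ensemble_def by blast+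
  then show ?thesis
  proof eventually_elim
    case (elim \<omega>)
    then show ?case using sheet_increment_mono[of "P \<omega>" "S \<omega>"] by blast
  qed
qed

lemma AE_sheet_increment_mono_Rats:
  assumes "airy_sheet_coupling M P S" "ya < yb"
  shows "AE \<omega> in M. \<forall>x\<in>\<rat>. \<forall>z\<in>\<rat>. x \<le> z \<longrightarrow>
                      S \<omega> yb x - S \<omega> ya x \<le> S \<omega> yb z - S \<omega> ya z"
proof -
  define N where "N = PiM (UNIV :: (real \<times> real) set) (\<lambda>_. borel :: real measure)"
  define shifted where "shifted c \<omega> = (\<lambda>(x, y). S \<omega> (x + c) (y + c))" for c \<omega>
  define Q where "Q g \<longleftrightarrow> (\<forall>x\<in>\<rat>. \<forall>z\<in>\<rat>. x \<le> z \<longrightarrow> g (yb, x) - g (ya, x) \<le> g (yb, z) - g (ya, z))"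
    for g :: "real \<times> real \<Rightarrow> real"
  define w where "w = \<bar>ya\<bar> + 1"
  have shifted_meas: "shifted c \<in> measurable M N" for c
    using assms(1) unfolding airy_sheet_coupling_def N_def shifted_def
    by (intro measurable_into_PiM_UNIV) (simp add: case_prod_beta)
  have "distr M N (shifted w) = distr M N (shifted 0)"
    using assms(1) unfolding airy_sheet_coupling_def N_def shifted_def by simp
  moreover have "{g \<in> space N. Q g} \<in> sets N"
    using pred_increment_mono_Rats unfolding N_def Q_def pred_def by simp
  moreover have "AE \<omega> in M. Q (shifted w \<omega>)"
    using AE_sheet_increment_mono_pos[OF assms(1)]
  proof eventually_elim
    case (elim \<omega>)
    have "0 < ya + w" "ya + w < yb + w" using assms(2) unfolding w_def by auto
    with elim show ?case unfolding Q_def shifted_def by auto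
  qed
  ultimately have "AE \<omega> in M. Q (shifted 0 \<omega>)"
    using AE_transfer_distr_eq shifted_meas by blast
  then show ?thesis unfolding Q_def shifted_def by simp
qed

theorem lemma1p1:
  fixes M :: "'a measure" and P :: "'a \<Rightarrow> nat \<Rightarrow> real \<Rightarrow> real"
    and S :: "'a \<Rightarrow> real \<Rightarrow> real \<Rightarrow> real" and ya yb :: real
  assumes "prob_space M"
    and "airy_sheet_coupling M P S"
    and "ya < yb"
  shows "AE \<omega> in M. continuous_on UNIV (\<lambda>x. S \<omega> yb x - S \<omega> ya x)
                  \<and> mono (\<lambda>x. S \<omega> yb x - S \<omega> ya x)"
proof -
  have "AE \<omega> in M. continuous_on UNIV (\<lambda>(x, y). S \<omega> x y)"
    using assms(2) unfolding airy_sheet_coupling_def by blast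
  with AE_sheet_increment_mono_Rats[OF assms(2,3)] show ?thesis
  proof eventually_elim
    case (elim \<omega>)
    have cont: "continuous_on UNIV (\<lambda>x. S \<omega> yb x - S \<omega> ya x)"
      using continuous_on_sections[OF elim(2)] by (intro continuous_on_diff)
    have "mono (\<lambda>x. S \<omega> yb x - S \<omega> ya x)"
      using elim(1) by (intro mono_if_mono_on_Rats[OF cont]) auto
    with cont show ?case ..
  qed
qed

end
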